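(* Let $\mathcal{G}=(V,L)$ be a finite connected undirected graph with monitor set $M$ and non-monitor set $N=V\setminus M$, $\sigma=|N|$, and let $P$ be a given set of measurement paths between monitors (Uncontrollable Probing). A set $S\subseteq N$ is $\sigma$-identifiable if and only if $\mathrm{MSC}(v)=\sigma$ for every $v\in S$.
   Context: A failure set is any $F\subseteq N$; a path fails iff it traverses a node of $F$. $P_F$ is the set of paths in $P$ traversing a node of $F$; $F_1,F_2$ distinguishable iff $P_{F_1}\ne P_{F_2}$. $S\subseteq N$ is $k$-identifiable if any two failure sets $F_1,F_2$ with $|F_1|,|F_2|\le k$ and $F_1\cap S\ne F_2\cap S$ are distinguishable. For $v\in N$, $P_v$ is the set of paths in $P$ traversing $v$. $\mathrm{MSC}(v)$ is the minimum cardinality of a set $V'\subseteq N\setminus\{v\}$ with $P_v\subseteq\bigcup_{w\in V'}P_w$; if no such $V'$ exists (e.g. when $v$ lies on a two-hop measurement path monitor–$v$–monitor), $\mathrm{MSC}(v):=\sigma$. *)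

theory Defs
  imports Main
begin

definition undirected_graph :: "'a set \<Rightarrow> ('a \<Rightarrow> 'a \<Rightarrow> bool) \<Rightarrow> bool" where
  "undirected_graph V E \<longleftrightarrow> finite V \<and>
     (\<forall>x y. E x y \<longrightarrow> x \<in> V \<and> y \<in> V) \<and>
     (\<forall>x y. E x y \<longrightarrow> E y x) \<and> (\<forall>x. \<not> E x x)"

definition graph_connected :: "'a set \<Rightarrow> ('a \<Rightarrow> 'a \<Rightarrow> bool) \<Rightarrow> bool" where
  "graph_connected V E \<longleftrightarrow>
     (\<forall>u\<in>V. \<forall>v\<in>V. (u, v) \<in> {(x, y). E x y}\<^sup>*)"

definition measurement_path ::
  "'a set \<Rightarrow> ('a \<Rightarrow> 'a \<Rightarrow> bool) \<Rightarrow> 'a set \<Rightarrow> 'a list \<Rightarrow> bool" where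
  "measurement_path V E M p \<longleftrightarrow> p \<noteq> [] \<and> set p \<subseteq> V \<and> distinct p \<and>
     (\<forall>i. Suc i < length p \<longrightarrow> E (p ! i) (p ! Suc i)) \<and>
     hd p \<in> M \<and> last p \<in> M"

definition paths_through :: "'a list set \<Rightarrow> 'a \<Rightarrow> 'a list set" where
  "paths_through P v = {p \<in> P. v \<in> set p}"

definition paths_failing :: "'a list set \<Rightarrow> 'a set \<Rightarrow> 'a list set" where
  "paths_failing P F = {p \<in> P. set p \<inter> F \<noteq> {}}"

definition distinguishable :: "'a list set \<Rightarrow> 'a set \<Rightarrow> 'a set \<Rightarrow> bool" where
  "distinguishable P F1 F2 \<longleftrightarrow> paths_failing P F1 \<noteq> paths_failing P F2"

definition k_identifiable :: "'a set \<Rightarrow> 'a list set \<Rightarrow> nat \<Rightarrow> 'a set \<Rightarrow> bool" where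
  "k_identifiable N P k S \<longleftrightarrow>
     (\<forall>F1 F2. F1 \<subseteq> N \<longrightarrow> F2 \<subseteq> N \<longrightarrow> card F1 \<le> k \<longrightarrow> card F2 \<le> k \<longrightarrow>
        F1 \<inter> S \<noteq> F2 \<inter> S \<longrightarrow> distinguishable P F1 F2)"

definition covers :: "'a list set \<Rightarrow> 'a \<Rightarrow> 'a set \<Rightarrow> bool" where
  "covers P v V' \<longleftrightarrow> paths_through P v \<subseteq> (\<Union>w\<in>V'. paths_through P w)"

definition MSC :: "'a set \<Rightarrow> 'a list set \<Rightarrow> 'a \<Rightarrow> nat" where
  "MSC N P v = (if \<exists>V'. V' \<subseteq> N - {v} \<and> covers P v V'
                then (LEAST n. \<exists>V'. V' \<subseteq> N - {v} \<and> covers P v V' \<and> card V' = n)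
                else card N)"

end

theory Submission
  imports Defs
begin

text \<open>Once \<open>\<sigma> = |N|\<close> failures are allowed, the cardinality bound is void and any two
  subsets of \<open>N\<close> are admissible failure sets. A node \<open>v\<close> is then identifiable iff some
  path of \<open>P\<close> meets \<open>N\<close> only in \<open>v\<close>: such a path separates every failure set containing \<open>v\<close>
  from every one avoiding it, and without it the failure sets \<open>N\<close> and \<open>N - {v}\<close> break
  exactly the same paths. Having no such private path means precisely that \<open>N - {v}\<close>
  does not cover \<open>P\<^sub>v\<close>, i.e. that \<open>MSC(v)\<close> takes its default value \<open>\<sigma>\<close>.\<close>

lemma covers_mono: "covers P v A \<Longrightarrow> A \<subseteq> B \<Longrightarrow> covers P v B"
  unfolding covers_def by blast

lemma MSC_eq_card_iff_not_covers:
  assumes "finite N" and "v \<in> N"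
  shows "MSC N P v = card N \<longleftrightarrow> \<not> covers P v (N - {v})"
proof
  assume MSC_eq: "MSC N P v = card N"
  show "\<not> covers P v (N - {v})"
  proof
    assume cov: "covers P v (N - {v})"
    then have "MSC N P v = (LEAST n. \<exists>V'. V' \<subseteq> N - {v} \<and> covers P v V' \<and> card V' = n)"
      unfolding MSC_def by (intro if_P) blast
    also have "\<dots> \<le> card (N - {v})"
      using cov by (intro Least_le exI[of _ "N - {v}"]) simp
    also have "\<dots> < card N"
      using assms by (rule card_Diff1_less)
    finally show False
      using MSC_eq by simp
  qed
next
  assume not_cov: "\<not> covers P v (N - {v})"
  have "\<not> (\<exists>V'. V' \<subseteq> N - {v} \<and> covers P v V')"
    using covers_mono not_cov by metis
  then show "MSC N P v = card N"
    unfolding MSC_def by (rule if_not_P)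
qed

lemma not_covers_iff_private_path:
  "\<not> covers P v (N - {v}) \<longleftrightarrow> (\<exists>p\<in>P. v \<in> set p \<and> set p \<inter> N \<subseteq> {v})"
  unfolding covers_def paths_through_def by blast

lemma distinguishable_by_private_path:
  assumes "p \<in> P" and "set p \<inter> N \<subseteq> {v}" and "v \<in> set p"
    and "v \<in> F1" and "F2 \<subseteq> N" and "v \<notin> F2"
  shows "distinguishable P F1 F2"
proof -
  have "p \<in> paths_failing P F1"
    using assms(1,3,4) unfolding paths_failing_def by blast
  moreover have "p \<notin> paths_failing P F2"
    using assms(2,5,6) unfolding paths_failing_def by blast
  ultimately show ?thesis
    unfolding distinguishable_def by blast
qed

lemma covers_imp_paths_failing_eq:
  assumes "covers P v (N - {v})"
  shows "paths_failing P N = paths_failing P (N - {v})"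
  using assms unfolding paths_failing_def covers_def paths_through_def by blast

lemma k_identifiable_large_k_iff:
  assumes "finite N" and "card N \<le> k" and "S \<subseteq> N"
  shows "k_identifiable N P k S \<longleftrightarrow> (\<forall>v\<in>S. \<not> covers P v (N - {v}))"
proof
  assume ident: "k_identifiable N P k S"
  show "\<forall>v\<in>S. \<not> covers P v (N - {v})"
  proof (intro ballI notI)
    fix v assume "v \<in> S" and cov: "covers P v (N - {v})"
    have "N \<inter> S \<noteq> (N - {v}) \<inter> S"
      using \<open>v \<in> S\<close> \<open>S \<subseteq> N\<close> by blast
    moreover have "card (N - {v}) \<le> k"
      using assms(1,2) by (meson Diff_subset card_mono le_trans)
    ultimately have "distinguishable P N (N - {v})"
      using ident assms(2) unfolding k_identifiable_def by blast
    then show False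
      using covers_imp_paths_failing_eq[OF cov] unfolding distinguishable_def by simp
  qed
next
  assume uncovered: "\<forall>v\<in>S. \<not> covers P v (N - {v})"
  have sep: "distinguishable P A B" if "v \<in> S" "v \<in> A" "B \<subseteq> N" "v \<notin> B" for A B v
  proof -
    obtain p where "p \<in> P" "set p \<inter> N \<subseteq> {v}" "v \<in> set p"
      using uncovered \<open>v \<in> S\<close> unfolding not_covers_iff_private_path by blast
    then show ?thesis
      using that(2-4) by (rule distinguishable_by_private_path)
  qed
  show "k_identifiable N P k S"
    unfolding k_identifiable_def
  proof (intro allI impI)
    fix F1 F2 assume "F1 \<subseteq> N" "F2 \<subseteq> N" "F1 \<inter> S \<noteq> F2 \<inter> S"
    then obtain v where "v \<in> S" and "v \<in> F1 \<and> v \<notin> F2 \<or> v \<in> F2 \<and> v \<notin> F1"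
      by blast
    then show "distinguishable P F1 F2"
      using sep[of v F1 F2] sep[of v F2 F1] \<open>F1 \<subseteq> N\<close> \<open>F2 \<subseteq> N\<close>
      unfolding distinguishable_def by auto
  qed
qed

theorem proposition5:
  fixes V :: "'a set" and E :: "'a \<Rightarrow> 'a \<Rightarrow> bool" and M :: "'a set"
    and P :: "'a list set" and S :: "'a set"
  assumes "undirected_graph V E"
    and "graph_connected V E"
    and "M \<subseteq> V"
    and "\<forall>p\<in>P. measurement_path V E M p"
    and "S \<subseteq> V - M"
  shows "k_identifiable (V - M) P (card (V - M)) S \<longleftrightarrow>
         (\<forall>v\<in>S. MSC (V - M) P v = card (V - M))"
proof -
  have fin: "finite (V - M)"
    using assms(1) unfolding undirected_graph_def by simp
  have "k_identifiable (V - M) P (card (V - M)) S \<longleftrightarrow>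
        (\<forall>v\<in>S. \<not> covers P v (V - M - {v}))"
    using k_identifiable_large_k_iff[OF fin order_refl assms(5)] .
  also have "\<dots> \<longleftrightarrow> (\<forall>v\<in>S. MSC (V - M) P v = card (V - M))"
    using MSC_eq_card_iff_not_covers[OF fin] assms(5) by blast
  finally show ?thesis .
qed

end
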